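(* Let $G$ be an abelian Hausdorff topological group and let $A\subseteq G$. The following conditions are equivalent: (i) $A$ is both topologically independent and absolutely Cauchy summable in $G$; (ii) the Kalton map $K_A:S_A\to G$ is a topologically isomorphic embedding (i.e. a continuous injective homomorphism which is a homeomorphism onto its image $K_A(S_A)=\langle A\rangle$).
   Context: All groups are abelian and all topological groups are Hausdorff. For $a\in G$, $\langle a\rangle$ denotes the cyclic subgroup generated by $a$ with the subspace topology, and $\langle A\rangle$ denotes the subgroup generated by $A$. For $A\subseteq G\setminus\{0\}$, $P_A=\prod_{a\in A}\langle a\rangle$ carries the Tychonoff product topology, and $S_A=\bigoplus_{a\in A}\langle a\rangle$ (elements of $P_A$ with finitely many nonzero coordinates) carries the subspace topology from $P_A$. The Kalton map $K_A:S_A\to G$ is the unique group homomorphism extending each inclusion $\langle a\rangle\to G$, $a\in A$ (so $K_A(\{g_a\})=\sum_a g_a$). A subset $A\subseteq G$ is absolutely Cauchy summable if for every neighbourhood $U$ of $0$ there is a finite $F\subseteq A$ with $\langle A\setminus F\rangle\subseteq U$. A subset $A\subseteq G$ is topologically independent if $0\notin A$ and for every neighbourhood $W$ of $0$ there is a neighbourhood $U$ of $0$ such that for every finite $F\subseteq A$ and all integers $\{z_a:a\in F\}$, $\sum_{a\in F}z_aa\in U$ implies $z_aa\in W$ for all $a\in F$. (Condition (ii) is to be read for $0\notin A$, so that $K_A$ is defined.) *)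

theory Defs
  imports "HOL-Analysis.Analysis"
begin

text \<open>Abelian Hausdorff topological groups are modelled by the type class
  topological_ab_group_add together with t2_space; the group is the whole type.\<close>

definition zmul :: "int \<Rightarrow> 'a::ab_group_add \<Rightarrow> 'a" where
  "zmul n a = (if 0 \<le> n then (\<Sum>i<nat n. a) else - (\<Sum>i<nat (- n). a))"

definition add_subgroup :: "'a::ab_group_add set \<Rightarrow> bool" where
  "add_subgroup H \<longleftrightarrow> 0 \<in> H \<and> (\<forall>x\<in>H. \<forall>y\<in>H. x - y \<in> H)"

definition gen :: "'a::ab_group_add set \<Rightarrow> 'a set" where
  "gen A = \<Inter>{H. add_subgroup H \<and> A \<subseteq> H}"

definition cyc :: "'a::ab_group_add \<Rightarrow> 'a set" where
  "cyc a = gen {a}"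

definition abs_cauchy_summable :: "'a::{topological_ab_group_add,t2_space} set \<Rightarrow> bool" where
  "abs_cauchy_summable A \<longleftrightarrow>
     (\<forall>U. open U \<and> 0 \<in> U \<longrightarrow> (\<exists>F. finite F \<and> F \<subseteq> A \<and> gen (A - F) \<subseteq> U))"

definition top_independent :: "'a::{topological_ab_group_add,t2_space} set \<Rightarrow> bool" where
  "top_independent A \<longleftrightarrow> 0 \<notin> A \<and>
     (\<forall>W. open W \<and> 0 \<in> W \<longrightarrow> (\<exists>U. open U \<and> 0 \<in> U \<and>
        (\<forall>F z. finite F \<and> F \<subseteq> A \<and> (\<Sum>a\<in>F. zmul (z a) a) \<in> U
               \<longrightarrow> (\<forall>a\<in>F. zmul (z a) a \<in> W))))"

text \<open>P_A: the Tychonoff product of the cyclic subgroups (with subspace topology),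
  elements are extensional functions on A.\<close>
definition P_top :: "'a::{topological_ab_group_add,t2_space} set \<Rightarrow> ('a \<Rightarrow> 'a) topology" where
  "P_top A = product_topology (\<lambda>a. subtopology euclidean (cyc a)) A"

definition S_set :: "'a::{topological_ab_group_add,t2_space} set \<Rightarrow> ('a \<Rightarrow> 'a) set" where
  "S_set A = {g \<in> topspace (P_top A). finite {a\<in>A. g a \<noteq> 0}}"

definition S_top :: "'a::{topological_ab_group_add,t2_space} set \<Rightarrow> ('a \<Rightarrow> 'a) topology" where
  "S_top A = subtopology (P_top A) (S_set A)"

definition kalton :: "'a::{topological_ab_group_add,t2_space} set \<Rightarrow> ('a \<Rightarrow> 'a) \<Rightarrow> 'a" where
  "kalton A g = (\<Sum>a\<in>{a\<in>A. g a \<noteq> 0}. g a)"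

text \<open>Topologically isomorphic embedding: homeomorphism onto the image (the map is a
  homomorphism by construction; injectivity and continuity are part of homeomorphic_map).\<close>
definition top_iso_embedding :: "'a::{topological_ab_group_add,t2_space} set \<Rightarrow> bool" where
  "top_iso_embedding A \<longleftrightarrow>
     homeomorphic_map (S_top A) (subtopology euclidean (kalton A ` S_set A)) (kalton A)"

end

theory Submission
  imports Defs
begin

text \<open>A basic neighbourhood of \<open>0\<close> in \<open>S\<^sub>A\<close> constrains only finitely many coordinates,
  and every coordinate of an element of \<open>S\<^sub>A\<close> supported off a finite set \<open>F\<close> lies in
  \<open>\<langle>A \<setminus> F\<rangle>\<close>. Absolute Cauchy summability makes this tail small, which is continuity of
  \<open>K\<^sub>A\<close>; conversely continuity at \<open>0\<close> puts the image of the subgroup of elements vanishing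
  on \<open>F\<close>, which contains \<open>\<langle>A \<setminus> F\<rangle>\<close>, into a given neighbourhood. Topological independence
  says precisely that \<open>K\<^sub>A d\<close> small forces all coordinates of \<open>d\<close> to be small; this gives
  injectivity (the group is T1) and openness of \<open>K\<^sub>A\<close> onto its image, and conversely
  openness and injectivity give it back.\<close>

section \<open>Subgroups and integer multiples\<close>

lemma add_subgroupD:
  assumes "add_subgroup H"
  shows "0 \<in> H" "x \<in> H \<Longrightarrow> y \<in> H \<Longrightarrow> x - y \<in> H"
    "x \<in> H \<Longrightarrow> - x \<in> H" "x \<in> H \<Longrightarrow> y \<in> H \<Longrightarrow> x + y \<in> H"
proof -
  show zero: "0 \<in> H" and diff: "x \<in> H \<Longrightarrow> y \<in> H \<Longrightarrow> x - y \<in> H" for x y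
    using assms by (simp_all add: add_subgroup_def)
  show minus: "x \<in> H \<Longrightarrow> - x \<in> H" for x
    using diff[OF zero, of x] by simp
  show "x \<in> H \<Longrightarrow> y \<in> H \<Longrightarrow> x + y \<in> H"
    using diff[of x "- y"] minus[of y] by simp
qed

lemma add_subgroup_sum:
  assumes "add_subgroup H" "\<And>i. i \<in> F \<Longrightarrow> f i \<in> H"
  shows "sum f F \<in> H"
  using assms(2)
  by (induction F rule: infinite_finite_induct) (simp_all add: add_subgroupD[OF assms(1)])

lemma add_subgroup_gen: "add_subgroup (gen B)"
  unfolding add_subgroup_def gen_def by auto

lemma gen_superset: "B \<subseteq> gen B"
  unfolding gen_def by auto

lemma gen_least: "add_subgroup H \<Longrightarrow> B \<subseteq> H \<Longrightarrow> gen B \<subseteq> H"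
  unfolding gen_def by auto

lemma cyc_subset_gen: "a \<in> B \<Longrightarrow> cyc a \<subseteq> gen B"
  unfolding cyc_def using gen_superset by (intro gen_least[OF add_subgroup_gen]) auto

lemma zero_in_cyc: "0 \<in> cyc a"
  unfolding cyc_def using add_subgroupD(1)[OF add_subgroup_gen] .

lemma self_in_cyc: "a \<in> cyc a"
  unfolding cyc_def using gen_superset by blast

lemma diff_in_cyc: "x \<in> cyc a \<Longrightarrow> y \<in> cyc a \<Longrightarrow> x - y \<in> cyc a"
  unfolding cyc_def using add_subgroupD(2)[OF add_subgroup_gen] .

lemma zmul_minus: "zmul (- n) a = - zmul n a"
  by (cases "n = 0") (auto simp: zmul_def)

lemma zmul_plus_one: "zmul (n + 1) a = zmul n a + a"
proof (cases "0 \<le> n")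
  case True
  then obtain m where "n = int m" using nonneg_eq_int by blast
  then show ?thesis by (simp add: zmul_def nat_add_distrib)
next
  case False
  define m where "m = nat (- n - 1)"
  have m: "n = - int (Suc m)"
    using False by (simp add: m_def)
  have "zmul (n + 1) a = - (\<Sum>i<m. a)"
    using m by (simp add: zmul_def)
  moreover have "zmul n a = - (\<Sum>i<Suc m. a)"
    unfolding m zmul_def by (simp del: of_nat_Suc)
  ultimately show ?thesis by simp
qed

lemma zmul_add: "zmul (m + n) a = zmul m a + zmul n a"
proof (induction n rule: int_induct[where k=0])
  case base
  then show ?case by (simp add: zmul_def)
next
  case (step1 i)
  then show ?case using zmul_plus_one[of "m + i" a] zmul_plus_one[of i a] by (simp add: algebra_simps)
next
  case (step2 i)
  then show ?case
    using zmul_plus_one[of "m + (i - 1)" a] zmul_plus_one[of "i - 1" a] by (simp add: algebra_simps)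
qed

lemma zmul_diff: "zmul (m - n) a = zmul m a - zmul n a"
  using zmul_add[of m "- n" a] zmul_minus[of n a] by simp

lemma zmul_in_add_subgroup:
  assumes "add_subgroup H" "a \<in> H"
  shows "zmul n a \<in> H"
proof -
  have "zmul (int k) a \<in> H" for k
    unfolding zmul_def using assms by (simp add: add_subgroup_sum)
  then show ?thesis
    by (cases n rule: int_cases2) (auto simp: zmul_minus intro: add_subgroupD(3)[OF assms(1)])
qed

lemma cyc_eq_range_zmul: "cyc a = range (\<lambda>n. zmul n a)"
proof
  have "add_subgroup (range (\<lambda>n. zmul n a))"
    unfolding add_subgroup_def
    by (metis (no_types, lifting) diff_self rangeE rangeI zmul_diff)
  moreover have "a \<in> range (\<lambda>n. zmul n a)"
    by (rule range_eqI[of _ _ 1]) (simp add: zmul_def)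
  ultimately show "cyc a \<subseteq> range (\<lambda>n. zmul n a)"
    unfolding cyc_def by (intro gen_least) auto
  show "range (\<lambda>n. zmul n a) \<subseteq> cyc a"
    using zmul_in_add_subgroup[OF add_subgroup_gen] self_in_cyc unfolding cyc_def by blast
qed

section \<open>The group \<open>S\<^sub>A\<close> and the Kalton map\<close>

lemma S_set_iff: "g \<in> S_set A \<longleftrightarrow> g \<in> (\<Pi>\<^sub>E a\<in>A. cyc a) \<and> finite {a\<in>A. g a \<noteq> 0}"
  by (simp add: S_set_def P_top_def)

lemma topspace_S_top: "topspace (S_top A) = S_set A"
  by (auto simp: S_top_def S_set_def)

lemma S_set_coordinates_zmul:
  assumes "d \<in> S_set A"
  obtains z where "\<And>a. a \<in> A \<Longrightarrow> d a = zmul (z a) a"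
proof -
  have "\<forall>a\<in>A. \<exists>n. d a = zmul n a"
    using assms by (auto simp: S_set_iff PiE_iff cyc_eq_range_zmul)
  then show thesis using that by metis
qed

lemma kalton_eq_sum:
  assumes "finite T" "T \<subseteq> A" "\<And>a. a \<in> A \<Longrightarrow> a \<notin> T \<Longrightarrow> g a = 0"
  shows "kalton A g = sum g T"
  unfolding kalton_def by (rule sum.mono_neutral_left) (use assms in auto)

lemma kalton_eq_sum_plus_tail:
  assumes "d \<in> S_set A" "finite F" "F \<subseteq> A"
  obtains t where "t \<in> gen (A - F)" "kalton A d = sum d F + t"
proof
  let ?G = "{a\<in>A. d a \<noteq> 0} - F"
  have "finite ?G"
    using assms(1) by (simp add: S_set_iff)
  then have "kalton A d = sum d (F \<union> ?G)"
    using assms(2,3) by (intro kalton_eq_sum) auto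
  also have "\<dots> = sum d F + sum d ?G"
    using assms(2) \<open>finite ?G\<close> by (intro sum.union_disjoint) auto
  finally show "kalton A d = sum d F + sum d ?G" .
  show "sum d ?G \<in> gen (A - F)"
  proof (intro add_subgroup_sum[OF add_subgroup_gen])
    fix i assume "i \<in> ?G"
    then show "d i \<in> gen (A - F)"
      using assms(1) cyc_subset_gen[of i "A - F"] by (auto simp: S_set_iff PiE_iff)
  qed
qed

text \<open>Elements of \<open>S\<^sub>A\<close> are extensional on \<open>A\<close>, so the group operations and the
  finitely supported elements are built with \<open>restrict\<close>.\<close>

definition S_zero :: "'a set \<Rightarrow> 'a \<Rightarrow> 'b::zero" where
  "S_zero A = restrict (\<lambda>a. 0) A"

definition S_diff :: "'a set \<Rightarrow> ('a \<Rightarrow> 'b::ab_group_add) \<Rightarrow> ('a \<Rightarrow> 'b) \<Rightarrow> 'a \<Rightarrow> 'b" where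
  "S_diff A h g = restrict (\<lambda>a. h a - g a) A"

definition S_finsupp :: "'a set \<Rightarrow> 'a set \<Rightarrow> ('a \<Rightarrow> 'b::zero) \<Rightarrow> 'a \<Rightarrow> 'b" where
  "S_finsupp A F f = restrict (\<lambda>a. if a \<in> F then f a else 0) A"

lemma S_zero_in_S_set: "S_zero A \<in> S_set A"
  by (auto simp: S_set_iff S_zero_def zero_in_cyc)

lemma kalton_S_zero: "kalton A (S_zero A) = 0"
  by (simp add: kalton_def S_zero_def)

lemma S_diff_in_S_set:
  assumes "h \<in> S_set A" "g \<in> S_set A"
  shows "S_diff A h g \<in> S_set A"
proof -
  have "finite {a\<in>A. S_diff A h g a \<noteq> 0}"
    by (rule finite_subset[of _ "{a\<in>A. h a \<noteq> 0} \<union> {a\<in>A. g a \<noteq> 0}"])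
      (use assms in \<open>auto simp: S_diff_def S_set_iff\<close>)
  moreover have "S_diff A h g \<in> (\<Pi>\<^sub>E a\<in>A. cyc a)"
    using assms by (auto simp: S_set_iff S_diff_def PiE_iff intro: diff_in_cyc)
  ultimately show ?thesis
    by (simp add: S_set_iff)
qed

lemma kalton_S_diff:
  assumes "h \<in> S_set A" "g \<in> S_set A"
  shows "kalton A (S_diff A h g) = kalton A h - kalton A g"
proof -
  let ?T = "{a\<in>A. h a \<noteq> 0} \<union> {a\<in>A. g a \<noteq> 0}"
  have fin: "finite ?T" using assms by (auto simp: S_set_iff)
  have "kalton A (S_diff A h g) = sum (S_diff A h g) ?T"
    by (rule kalton_eq_sum[OF fin]) (auto simp: S_diff_def)
  also have "\<dots> = sum h ?T - sum g ?T"
    unfolding sum_subtractf[symmetric] by (rule sum.cong) (auto simp: S_diff_def)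
  also have "\<dots> = kalton A h - kalton A g"
    using kalton_eq_sum[OF fin] by auto
  finally show ?thesis .
qed

lemma S_finsupp_in_S_set:
  assumes "finite F" "\<And>a. a \<in> F \<Longrightarrow> f a \<in> cyc a"
  shows "S_finsupp A F f \<in> S_set A"
proof -
  have "{a\<in>A. S_finsupp A F f a \<noteq> 0} \<subseteq> F"
    by (auto simp: S_finsupp_def)
  then show ?thesis
    using assms by (auto simp: S_set_iff S_finsupp_def zero_in_cyc PiE_iff intro: finite_subset)
qed

lemma kalton_S_finsupp:
  assumes "finite F" "F \<subseteq> A"
  shows "kalton A (S_finsupp A F f) = sum f F"
proof -
  have "kalton A (S_finsupp A F f) = sum (S_finsupp A F f) F"
    by (rule kalton_eq_sum) (use assms in \<open>auto simp: S_finsupp_def\<close>)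
  also have "\<dots> = sum f F"
    using assms by (intro sum.cong) (auto simp: S_finsupp_def)
  finally show ?thesis .
qed

lemma gen_subset_kalton_vanishing_on:
  assumes "F \<subseteq> A"
  shows "gen (A - F) \<subseteq> kalton A ` {h \<in> S_set A. \<forall>a\<in>F. h a = 0}"
proof (rule gen_least)
  let ?S0 = "{h \<in> S_set A. \<forall>a\<in>F. h a = 0}"
  show "add_subgroup (kalton A ` ?S0)"
    unfolding add_subgroup_def
  proof (intro conjI ballI)
    have "S_zero A \<in> ?S0"
      using S_zero_in_S_set assms by (auto simp: S_zero_def)
    then show "0 \<in> kalton A ` ?S0"
      by (rule rev_image_eqI) (simp add: kalton_S_zero)
  next
    fix x y assume "x \<in> kalton A ` ?S0" "y \<in> kalton A ` ?S0"
    then obtain h g where hg: "h \<in> ?S0" "g \<in> ?S0" "x = kalton A h" "y = kalton A g"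
      by auto
    then have "x - y = kalton A (S_diff A h g)"
      by (simp add: kalton_S_diff)
    moreover have "S_diff A h g \<in> ?S0"
      using S_diff_in_S_set[of h A g] hg(1,2) assms by (auto simp: S_diff_def)
    ultimately show "x - y \<in> kalton A ` ?S0"
      by (rule image_eqI)
  qed
  show "A - F \<subseteq> kalton A ` ?S0"
  proof
    fix a assume a: "a \<in> A - F"
    have "S_finsupp A {a} id \<in> ?S0"
      using S_finsupp_in_S_set[of "{a}" id A] self_in_cyc a assms by (auto simp: S_finsupp_def)
    moreover have "a = kalton A (S_finsupp A {a} id)"
      using a kalton_S_finsupp[of "{a}" A id] by simp
    ultimately show "a \<in> kalton A ` ?S0"
      by blast
  qed
qed

lemma openin_S_top_coordinates:
  assumes "finite F" "F \<subseteq> A" "\<And>a. a \<in> F \<Longrightarrow> open (N a)"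
  shows "openin (S_top A) {h \<in> S_set A. \<forall>a\<in>F. h a \<in> N a}"
proof -
  define X where "X a = (if a \<in> F then cyc a \<inter> N a else cyc a)" for a
  have "openin (P_top A) (\<Pi>\<^sub>E a\<in>A. X a)"
    unfolding P_top_def
  proof (rule product_topology_basis)
    show "openin (top_of_set (cyc a)) (X a)" for a
      using assms(3) by (auto simp: X_def openin_open_Int)
    show "finite {a. X a \<noteq> topspace (top_of_set (cyc a))}"
      by (rule finite_subset[OF _ assms(1)]) (auto simp: X_def)
  qed
  moreover have "h \<in> (\<Pi>\<^sub>E a\<in>A. X a) \<longleftrightarrow> (\<forall>a\<in>F. h a \<in> N a)" if h: "h \<in> S_set A" for h
  proof
    show "\<forall>a\<in>F. h a \<in> N a" if "h \<in> (\<Pi>\<^sub>E a\<in>A. X a)"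
    proof
      fix a assume "a \<in> F"
      then have "h a \<in> X a"
        using PiE_mem[OF that] assms(2) by blast
      then show "h a \<in> N a"
        using \<open>a \<in> F\<close> by (simp add: X_def)
    qed
    show "h \<in> (\<Pi>\<^sub>E a\<in>A. X a)" if "\<forall>a\<in>F. h a \<in> N a"
      using h that by (auto simp: S_set_iff PiE_iff X_def)
  qed
  then have "(\<Pi>\<^sub>E a\<in>A. X a) \<inter> S_set A = {h \<in> S_set A. \<forall>a\<in>F. h a \<in> N a}"
    by blast
  ultimately show ?thesis
    unfolding S_top_def by (metis openin_subtopology_Int)
qed

lemma openin_S_top_contains_coordinates:
  assumes "openin (S_top A) V" "g \<in> V"
  obtains F N where "finite F" "F \<subseteq> A" "\<And>a. a \<in> F \<Longrightarrow> open (N a)"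
    "\<And>a. a \<in> F \<Longrightarrow> g a \<in> N a" "{h \<in> S_set A. \<forall>a\<in>F. h a \<in> N a} \<subseteq> V"
proof -
  obtain T where T: "openin (P_top A) T" "V = T \<inter> S_set A"
    using assms(1) unfolding S_top_def openin_subtopology by blast
  obtain X where X: "finite {a\<in>A. X a \<noteq> cyc a}" "\<forall>a\<in>A. openin (top_of_set (cyc a)) (X a)"
    "g \<in> (\<Pi>\<^sub>E a\<in>A. X a)" "(\<Pi>\<^sub>E a\<in>A. X a) \<subseteq> T"
    using T assms(2) unfolding P_top_def openin_product_topology_alt by auto
  obtain N where N: "\<And>a. a \<in> A \<Longrightarrow> open (N a) \<and> X a = cyc a \<inter> N a"
    using X(2) unfolding openin_open by metis
  let ?F = "{a\<in>A. X a \<noteq> cyc a}"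
  have "{h \<in> S_set A. \<forall>a\<in>?F. h a \<in> N a} \<subseteq> (\<Pi>\<^sub>E a\<in>A. X a) \<inter> S_set A"
    using N by (auto simp: S_set_iff PiE_iff extensional_def)
  then show thesis
    using that[of ?F N] X N T(2) by (auto simp: PiE_iff)
qed

lemma open_Collect_plus:
  fixes Q :: "'a::topological_monoid_add set"
  shows "open Q \<Longrightarrow> open {x. x + c \<in> Q}"
  using open_vimage[of Q "\<lambda>x. x + c"] continuous_on_add[OF continuous_on_id continuous_on_const, of UNIV c]
  by (simp add: vimage_def)

lemma open_Collect_minus:
  fixes Q :: "'a::topological_group_add set"
  shows "open Q \<Longrightarrow> open {x. x - c \<in> Q}"
  using open_Collect_plus[of Q "- c"] by simp

lemma zero_nhds_add_subset:
  fixes U :: "'a::topological_monoid_add set"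
  assumes "open U" "0 \<in> U"
  obtains V where "open V" "0 \<in> V" "\<And>x y. x \<in> V \<Longrightarrow> y \<in> V \<Longrightarrow> x + y \<in> U"
proof -
  have "((\<lambda>p. fst p + snd p) \<longlongrightarrow> (0::'a)) (nhds 0 \<times>\<^sub>F nhds 0)"
    by (intro tendsto_add_zero filterlim_fst filterlim_snd)
  then have "eventually (\<lambda>p. fst p + snd p \<in> U) (nhds 0 \<times>\<^sub>F nhds 0)"
    using assms topological_tendstoD by blast
  then obtain P where "eventually P (nhds 0)" "\<And>x y. P x \<Longrightarrow> P y \<Longrightarrow> x + y \<in> U"
    unfolding eventually_prod_same by auto
  then show thesis
    using that unfolding eventually_nhds by metis
qed

lemma zero_nhds_sum_subset:
  fixes U :: "'a::topological_comm_monoid_add set"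
  assumes "finite F" "open U" "0 \<in> U"
  obtains V where "open V" "0 \<in> V" "\<And>x. (\<And>i. i \<in> F \<Longrightarrow> x i \<in> V) \<Longrightarrow> sum x F \<in> U"
proof -
  have "\<exists>V. open V \<and> 0 \<in> V \<and> (\<forall>x. (\<forall>i\<in>F. x i \<in> V) \<longrightarrow> sum x F \<in> U)"
    using assms
  proof (induction F arbitrary: U rule: finite_induct)
    case empty
    then show ?case by auto
  next
    case (insert b F)
    obtain V where V: "open V" "0 \<in> V" "\<And>x y. x \<in> V \<Longrightarrow> y \<in> V \<Longrightarrow> x + y \<in> U"
      using zero_nhds_add_subset insert.prems by blast
    obtain V' where "open V'" "0 \<in> V'" "\<forall>x. (\<forall>i\<in>F. x i \<in> V') \<longrightarrow> sum x F \<in> V"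
      using insert.IH V(1,2) by blast
    then show ?case
      using V insert.hyps by (intro exI[of _ "V \<inter> V'"]) auto
  qed
  then show thesis
    using that by blast
qed

section \<open>Topological independence in terms of the Kalton map\<close>

lemma zmul_sums_control_iff_kalton_control:
  assumes "0 \<in> W"
  shows "(\<forall>F z. finite F \<and> F \<subseteq> A \<and> (\<Sum>a\<in>F. zmul (z a) a) \<in> U \<longrightarrow> (\<forall>a\<in>F. zmul (z a) a \<in> W))
     \<longleftrightarrow> (\<forall>d\<in>S_set A. kalton A d \<in> U \<longrightarrow> (\<forall>a\<in>A. d a \<in> W))"
proof
  assume indep: "\<forall>F z. finite F \<and> F \<subseteq> A \<and> (\<Sum>a\<in>F. zmul (z a) a) \<in> U \<longrightarrow> (\<forall>a\<in>F. zmul (z a) a \<in> W)"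
  show "\<forall>d\<in>S_set A. kalton A d \<in> U \<longrightarrow> (\<forall>a\<in>A. d a \<in> W)"
  proof (intro ballI impI)
    fix d a assume d: "d \<in> S_set A" "kalton A d \<in> U" and a: "a \<in> A"
    obtain z where z: "\<And>b. b \<in> A \<Longrightarrow> d b = zmul (z b) b"
      using S_set_coordinates_zmul[OF d(1)] by blast
    let ?F = "{b\<in>A. d b \<noteq> 0}"
    have "(\<Sum>b\<in>?F. zmul (z b) b) = kalton A d"
      unfolding kalton_def by (rule sum.cong) (simp_all add: z)
    moreover have "finite ?F" "?F \<subseteq> A"
      using d(1) by (auto simp: S_set_iff)
    ultimately have "\<forall>b\<in>?F. zmul (z b) b \<in> W"
      using indep[rule_format, of ?F z] d(2) by simp
    then show "d a \<in> W"
      using a z[OF a] assms by (cases "d a = 0") simp_all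
  qed
next
  assume small: "\<forall>d\<in>S_set A. kalton A d \<in> U \<longrightarrow> (\<forall>a\<in>A. d a \<in> W)"
  show "\<forall>F z. finite F \<and> F \<subseteq> A \<and> (\<Sum>a\<in>F. zmul (z a) a) \<in> U \<longrightarrow> (\<forall>a\<in>F. zmul (z a) a \<in> W)"
  proof (intro allI impI ballI)
    fix F z a assume F: "finite F \<and> F \<subseteq> A \<and> (\<Sum>a\<in>F. zmul (z a) a) \<in> U" and a: "a \<in> F"
    let ?d = "S_finsupp A F (\<lambda>a. zmul (z a) a)"
    have "?d \<in> S_set A"
      using F by (intro S_finsupp_in_S_set) (auto simp: cyc_eq_range_zmul)
    moreover have "kalton A ?d \<in> U"
      using F kalton_S_finsupp[of F A] by simp
    moreover have "a \<in> A"
      using a F by blast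
    ultimately have "?d a \<in> W"
      using small by blast
    then show "zmul (z a) a \<in> W"
      using a F by (auto simp: S_finsupp_def)
  qed
qed

lemma top_independent_iff_kalton:
  "top_independent A \<longleftrightarrow> 0 \<notin> A \<and>
     (\<forall>W. open W \<and> 0 \<in> W \<longrightarrow> (\<exists>U. open U \<and> 0 \<in> U \<and>
        (\<forall>d\<in>S_set A. kalton A d \<in> U \<longrightarrow> (\<forall>a\<in>A. d a \<in> W))))"
  unfolding top_independent_def by (simp add: zmul_sums_control_iff_kalton_control)

lemma inj_on_kalton:
  assumes "top_independent A"
  shows "inj_on (kalton A) (S_set A)"
proof (rule inj_onI)
  fix h g assume hg: "h \<in> S_set A" "g \<in> S_set A" and eq: "kalton A h = kalton A g"
  let ?d = "S_diff A h g"
  have d: "?d \<in> S_set A" "kalton A ?d = 0"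
    using S_diff_in_S_set[OF hg] kalton_S_diff[OF hg] eq by auto
  have "?d b = 0" if b: "b \<in> A" for b
  proof (rule ccontr)
    assume "?d b \<noteq> 0"
    then obtain W where W: "open W" "0 \<in> W" "?d b \<notin> W"
      using t1_space[of 0 "?d b"] by auto
    then obtain U where "open U" "0 \<in> U" "\<forall>e\<in>S_set A. kalton A e \<in> U \<longrightarrow> (\<forall>a\<in>A. e a \<in> W)"
      using assms unfolding top_independent_iff_kalton by blast
    then show False
      using d b W(3) by auto
  qed
  then show "h = g"
    using hg by (intro extensionalityI[of _ A]) (auto simp: S_set_iff S_diff_def PiE_iff)
qed

lemma continuous_map_kalton:
  assumes "abs_cauchy_summable A"
  shows "continuous_map (S_top A) euclidean (kalton A)"
  unfolding continuous_map_def topspace_S_top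
proof (intro conjI allI impI)
  show "kalton A \<in> S_set A \<rightarrow> topspace euclidean" by simp
  fix Q :: "'a set" assume "openin euclidean Q"
  then have Q: "open Q" by simp
  show "openin (S_top A) {x \<in> S_set A. kalton A x \<in> Q}"
  proof (subst openin_subopen, intro ballI)
    fix g assume "g \<in> {x \<in> S_set A. kalton A x \<in> Q}"
    then have g: "g \<in> S_set A" "kalton A g \<in> Q" by auto
    have Qg: "open {x. x + kalton A g \<in> Q}" "0 \<in> {x. x + kalton A g \<in> Q}"
      using open_Collect_plus[OF Q] g(2) by auto
    obtain U where U: "open U" "0 \<in> U"
      "\<And>x y. x \<in> U \<Longrightarrow> y \<in> U \<Longrightarrow> x + y \<in> {x. x + kalton A g \<in> Q}"
      using zero_nhds_add_subset[OF Qg] by blast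
    obtain F where F: "finite F" "F \<subseteq> A" "gen (A - F) \<subseteq> U"
      using assms U(1,2) unfolding abs_cauchy_summable_def by blast
    obtain V where V: "open V" "0 \<in> V" "\<And>x. (\<And>i. i \<in> F \<Longrightarrow> x i \<in> V) \<Longrightarrow> sum x F \<in> U"
      using zero_nhds_sum_subset[OF F(1) U(1,2)] by blast
    let ?T = "{h \<in> S_set A. \<forall>a\<in>F. h a \<in> {y. y - g a \<in> V}}"
    have "openin (S_top A) ?T"
      using F open_Collect_minus[OF V(1)] by (intro openin_S_top_coordinates) auto
    moreover have "g \<in> ?T"
      using g V(2) by simp
    moreover have "?T \<subseteq> {x \<in> S_set A. kalton A x \<in> Q}"
    proof (intro subsetI CollectI conjI)
      fix h assume h: "h \<in> ?T"
      let ?d = "S_diff A h g"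
      obtain t where "t \<in> gen (A - F)" "kalton A ?d = sum ?d F + t"
        using kalton_eq_sum_plus_tail[OF S_diff_in_S_set F(1,2)] h g(1) by blast
      moreover have "sum ?d F \<in> U"
        using h F(2) by (intro V(3)) (auto simp: S_diff_def)
      ultimately have "kalton A ?d + kalton A g \<in> Q"
        using U(3) F(3) by auto
      then show "kalton A h \<in> Q"
        using kalton_S_diff[of h A g] h g(1) by simp
      show "h \<in> S_set A" using h by simp
    qed
    ultimately show "\<exists>T. openin (S_top A) T \<and> g \<in> T \<and> T \<subseteq> {x \<in> S_set A. kalton A x \<in> Q}"
      by blast
  qed
qed

lemma open_map_kalton:
  assumes "top_independent A"
  shows "open_map (S_top A) (top_of_set (kalton A ` S_set A)) (kalton A)"
  unfolding open_map_def
proof (intro allI impI)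
  fix V assume V: "openin (S_top A) V"
  then have VS: "V \<subseteq> S_set A"
    using openin_subset topspace_S_top by metis
  show "openin (top_of_set (kalton A ` S_set A)) (kalton A ` V)"
  proof (subst openin_subopen, intro ballI)
    fix y assume "y \<in> kalton A ` V"
    then obtain g where g: "g \<in> V" "y = kalton A g" by blast
    obtain F N where F: "finite F" "F \<subseteq> A" "\<And>a. a \<in> F \<Longrightarrow> open (N a)"
      "\<And>a. a \<in> F \<Longrightarrow> g a \<in> N a" "{h \<in> S_set A. \<forall>a\<in>F. h a \<in> N a} \<subseteq> V"
      using openin_S_top_contains_coordinates[OF V g(1)] by blast
    let ?W = "\<Inter>a\<in>F. {x. x + g a \<in> N a}"
    have "open ?W"
      using F(1,3) by (intro open_INT ballI open_Collect_plus) auto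
    moreover have "0 \<in> ?W"
      using F(4) by simp
    ultimately obtain U where U: "open U" "0 \<in> U"
      "\<forall>d\<in>S_set A. kalton A d \<in> U \<longrightarrow> (\<forall>a\<in>A. d a \<in> ?W)"
      using assms unfolding top_independent_iff_kalton by blast
    let ?T = "kalton A ` S_set A \<inter> {x. x - kalton A g \<in> U}"
    have "openin (top_of_set (kalton A ` S_set A)) ?T"
      using open_Collect_minus[OF U(1)] by (rule openin_open_Int)
    moreover have "y \<in> ?T"
      using g VS U(2) by auto
    moreover have "?T \<subseteq> kalton A ` V"
    proof
      fix x assume "x \<in> ?T"
      then obtain h where h: "h \<in> S_set A" "x = kalton A h" "kalton A h - kalton A g \<in> U"
        by auto
      have gS: "g \<in> S_set A"
        using g(1) VS by blast
      have "S_diff A h g \<in> S_set A" "kalton A (S_diff A h g) \<in> U"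
        using S_diff_in_S_set[OF h(1) gS] kalton_S_diff[OF h(1) gS] h(3) by auto
      then have "\<forall>a\<in>F. S_diff A h g a \<in> ?W"
        using U(3) F(2) by blast
      have "\<forall>a\<in>F. h a \<in> N a"
      proof
        fix a assume a: "a \<in> F"
        then have "S_diff A h g a + g a \<in> N a"
          using \<open>\<forall>a\<in>F. S_diff A h g a \<in> ?W\<close> by blast
        then show "h a \<in> N a"
          using a F(2) by (auto simp: S_diff_def)
      qed
      then show "x \<in> kalton A ` V"
        using F(5) h by blast
    qed
    ultimately show "\<exists>T. openin (top_of_set (kalton A ` S_set A)) T \<and> y \<in> T \<and> T \<subseteq> kalton A ` V"
      by blast
  qed
qed

lemma abs_cauchy_summable_if_continuous_kalton:
  assumes "continuous_map (S_top A) euclidean (kalton A)"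
  shows "abs_cauchy_summable A"
  unfolding abs_cauchy_summable_def
proof (intro allI impI)
  fix U :: "'a set" assume U: "open U \<and> 0 \<in> U"
  have open_preimage: "openin (S_top A) {x \<in> S_set A. kalton A x \<in> U}"
    using openin_continuous_map_preimage[OF assms, of U] U by (simp add: topspace_S_top)
  have zero_in_preimage: "S_zero A \<in> {x \<in> S_set A. kalton A x \<in> U}"
    using S_zero_in_S_set[of A] kalton_S_zero[of A] U by simp
  obtain F N where F: "finite F" "F \<subseteq> A" "\<And>a. a \<in> F \<Longrightarrow> open (N a)"
    "\<And>a. a \<in> F \<Longrightarrow> S_zero A a \<in> N a"
    "{h \<in> S_set A. \<forall>a\<in>F. h a \<in> N a} \<subseteq> {x \<in> S_set A. kalton A x \<in> U}"
    using openin_S_top_contains_coordinates[OF open_preimage zero_in_preimage] by blast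
  have "kalton A ` {h \<in> S_set A. \<forall>a\<in>F. h a = 0} \<subseteq> U"
    using F(2,4,5) by (force simp: S_zero_def)
  then have "gen (A - F) \<subseteq> U"
    using gen_subset_kalton_vanishing_on[OF F(2)] by blast
  then show "\<exists>F. finite F \<and> F \<subseteq> A \<and> gen (A - F) \<subseteq> U"
    using F(1,2) by blast
qed

lemma top_independent_if_open_map_kalton:
  assumes "0 \<notin> A" "abs_cauchy_summable A" "inj_on (kalton A) (S_set A)"
    and "open_map (S_top A) (top_of_set (kalton A ` S_set A)) (kalton A)"
  shows "top_independent A"
  unfolding top_independent_iff_kalton
proof (intro conjI allI impI)
  show "0 \<notin> A" by (fact assms(1))
  fix W :: "'a set" assume W: "open W \<and> 0 \<in> W"
  obtain F where F: "finite F" "F \<subseteq> A" "gen (A - F) \<subseteq> W"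
    using assms(2) W unfolding abs_cauchy_summable_def by blast
  let ?N = "{h \<in> S_set A. \<forall>a\<in>F. h a \<in> W}"
  have "openin (S_top A) ?N"
    using F(1,2) W by (intro openin_S_top_coordinates) auto
  then have "openin (top_of_set (kalton A ` S_set A)) (kalton A ` ?N)"
    using assms(4) unfolding open_map_def by blast
  then obtain U where U: "open U" "kalton A ` ?N = kalton A ` S_set A \<inter> U"
    unfolding openin_open by blast
  have "S_zero A \<in> ?N"
    using S_zero_in_S_set W F(2) by (auto simp: S_zero_def)
  then have "0 \<in> kalton A ` ?N"
    by (rule rev_image_eqI) (simp add: kalton_S_zero)
  then have "0 \<in> U"
    using U(2) by blast
  moreover have "\<forall>a\<in>A. d a \<in> W" if d: "d \<in> S_set A" "kalton A d \<in> U" for d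
  proof
    fix a assume a: "a \<in> A"
    have "kalton A d \<in> kalton A ` ?N"
      using U(2) d by blast
    then have "d \<in> ?N"
      using assms(3) d(1) by (auto simp: inj_on_def)
    moreover have "d a \<in> cyc a"
      using d(1) a by (auto simp: S_set_iff PiE_iff)
    ultimately show "d a \<in> W"
      using a F(3) cyc_subset_gen[of a "A - F"] by (cases "a \<in> F") auto
  qed
  ultimately show "\<exists>U. open U \<and> 0 \<in> U \<and> (\<forall>d\<in>S_set A. kalton A d \<in> U \<longrightarrow> (\<forall>a\<in>A. d a \<in> W))"
    using U(1) by blast
qed

theorem theorem5p1:
  fixes A :: "'a::{topological_ab_group_add,t2_space} set"
  shows "(top_independent A \<and> abs_cauchy_summable A) \<longleftrightarrow>
         (0 \<notin> A \<and> top_iso_embedding A)"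
proof
  assume A: "top_independent A \<and> abs_cauchy_summable A"
  have "homeomorphic_map (S_top A) (top_of_set (kalton A ` S_set A)) (kalton A)"
  proof (rule bijective_open_imp_homeomorphic_map)
    show "continuous_map (S_top A) (top_of_set (kalton A ` S_set A)) (kalton A)"
      using continuous_map_kalton A by (intro continuous_map_into_subtopology) (auto simp: topspace_S_top)
    show "open_map (S_top A) (top_of_set (kalton A ` S_set A)) (kalton A)"
      using open_map_kalton A by blast
    show "kalton A ` topspace (S_top A) = topspace (top_of_set (kalton A ` S_set A))"
      by (simp add: topspace_S_top)
    show "inj_on (kalton A) (topspace (S_top A))"
      using inj_on_kalton[of A] A by (simp add: topspace_S_top)
  qed
  then show "0 \<notin> A \<and> top_iso_embedding A"
    using A by (simp add: top_iso_embedding_def top_independent_def)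
next
  assume A: "0 \<notin> A \<and> top_iso_embedding A"
  then have hom: "homeomorphic_map (S_top A) (top_of_set (kalton A ` S_set A)) (kalton A)"
    by (simp add: top_iso_embedding_def)
  have "continuous_map (S_top A) euclidean (kalton A)"
    using homeomorphic_imp_continuous_map[OF hom] continuous_map_in_subtopology by blast
  then have summable: "abs_cauchy_summable A"
    by (rule abs_cauchy_summable_if_continuous_kalton)
  moreover have "top_independent A"
  proof (rule top_independent_if_open_map_kalton)
    show "inj_on (kalton A) (S_set A)"
      using homeomorphic_imp_injective_map[OF hom] by (simp add: topspace_S_top)
  qed (use A summable homeomorphic_imp_open_map[OF hom] in simp_all)
  ultimately show "top_independent A \<and> abs_cauchy_summable A"
    by blast
qed

end
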